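(* Let $\nu\ge0$, $\Psi_\nu(x)=I_{\nu+1}(x)/I_\nu(x)$ and $$\lambda_\nu(x)=\frac{\log\left(1-\frac{2}{x}\Psi_\nu(x)\right)}{\log\Psi_\nu(x)}.$$ Then $$\lim_{x\to\infty}\lambda_\nu(x)=\frac{4}{2\nu+1}.$$
   Context: $I_\nu$ denotes the modified Bessel function of the first kind of order $\nu$. *)

theory Defs
  imports "HOL-Analysis.Analysis"
begin

definition besselI :: "real \<Rightarrow> real \<Rightarrow> real" where
  "besselI \<nu> x = (\<Sum>k. (x / 2) powr (2 * real k + \<nu>) / (fact k * Gamma (real k + \<nu> + 1)))"

definition Psi :: "real \<Rightarrow> real \<Rightarrow> real" where
  "Psi \<nu> x = besselI (\<nu> + 1) x / besselI \<nu> x"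

definition lambda_nu :: "real \<Rightarrow> real \<Rightarrow> real" where
  "lambda_nu \<nu> x = ln (1 - (2 / x) * Psi \<nu> x) / ln (Psi \<nu> x)"

end

theory Submission
  imports Defs "HOL-Real_Asymp.Real_Asymp"
begin

text \<open>
  Write \<open>I\<^sub>\<nu>(x) = (x/2)\<^sup>\<nu> G\<^sub>\<nu>(x\<^sup>2/4)\<close> with an entire power series \<open>G\<^sub>\<nu>\<close>.
  The recurrence \<open>G\<^sub>\<nu> = (\<nu>+1) G\<^sub>\<nu>\<^sub>+\<^sub>1 + z G\<^sub>\<nu>\<^sub>+\<^sub>2\<close> together with \<open>G\<^sub>\<nu>' = G\<^sub>\<nu>\<^sub>+\<^sub>1\<close>
  shows that \<open>u = \<Psi>\<^sub>\<nu>\<close> solves the Riccati equation \<open>u' = 1 - (2c/x) u - u\<^sup>2\<close>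
  with \<open>c = \<nu> + 1/2\<close>, and \<open>u(x) \<sim> x/(2c+1)\<close> at \<open>0\<close>. The functions
  \<open>x/(c + sqrt(x\<^sup>2+b\<^sup>2))\<close> are strict super- resp. subsolutions for \<open>b = c\<close> resp.
  \<open>b = c + 2\<close>, so a first-contact argument traps \<open>u\<close> between them on \<open>(0,\<infinity>)\<close>.
  Both barriers satisfy \<open>x(1 - w(x)) \<rightarrow> c\<close>, hence \<open>\<Psi>\<^sub>\<nu>(x) = 1 - c/x + o(1/x)\<close>, and
  then \<open>\<lambda>\<^sub>\<nu>(x) = x log(1 - 2\<Psi>\<^sub>\<nu>/x) / x log \<Psi>\<^sub>\<nu> \<rightarrow> (-2)/(-c)\<close>.
\<close>

section \<open>The power series of the Bessel function\<close>

lemma Gamma_real_plus1: "(z::real) > 0 \<Longrightarrow> Gamma (z + 1) = z * Gamma z"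
  by (rule Gamma_plus1) (auto elim!: nonpos_Ints_cases)

definition bessel_coeff :: "real \<Rightarrow> nat \<Rightarrow> real" where
  "bessel_coeff \<nu> k = 1 / (fact k * Gamma (real k + \<nu> + 1))"

definition bessel_series :: "real \<Rightarrow> real \<Rightarrow> real" where
  "bessel_series \<nu> z = (\<Sum>k. bessel_coeff \<nu> k * z ^ k)"

lemma bessel_coeff_pos: "\<nu> \<ge> 0 \<Longrightarrow> bessel_coeff \<nu> k > 0"
  unfolding bessel_coeff_def by (intro divide_pos_pos mult_pos_pos) auto

lemma bessel_coeff_Suc:
  assumes "\<nu> \<ge> 0"
  shows "bessel_coeff \<nu> (Suc k) = bessel_coeff \<nu> k / ((real k + 1) * (real k + \<nu> + 1))"
proof -
  have "Gamma (real (Suc k) + \<nu> + 1) = (real k + \<nu> + 1) * Gamma (real k + \<nu> + 1)"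
    using Gamma_real_plus1[of "real k + \<nu> + 1"] assms by (simp add: algebra_simps)
  thus ?thesis by (simp add: bessel_coeff_def field_simps)
qed

lemma summable_bessel_series:
  assumes "\<nu> \<ge> 0"
  shows "summable (\<lambda>k. bessel_coeff \<nu> k * z ^ k)"
proof (rule summable_ratio_test[where c = "1/2" and N = "nat \<lceil>2 * \<bar>z\<bar>\<rceil>"])
  fix n assume "n \<ge> nat \<lceil>2 * \<bar>z\<bar>\<rceil>"
  hence n: "real n \<ge> 2 * \<bar>z\<bar>" by linarith
  have a: "bessel_coeff \<nu> n > 0" using bessel_coeff_pos[OF assms] .
  have "\<bar>z\<bar> / ((real n + 1) * (real n + \<nu> + 1)) \<le> \<bar>z\<bar> / (real n + 1)"
    using assms by (intro divide_left_mono) (auto simp: mult_le_cancel_left1)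
  also have "\<dots> \<le> 1/2" using n by (simp add: field_simps)
  finally have q: "\<bar>z\<bar> / ((real n + 1) * (real n + \<nu> + 1)) \<le> 1/2" .
  have "norm (bessel_coeff \<nu> (Suc n) * z ^ Suc n)
      = bessel_coeff \<nu> n * \<bar>z\<bar> ^ n * (\<bar>z\<bar> / ((real n + 1) * (real n + \<nu> + 1)))"
    using a assms by (simp add: bessel_coeff_Suc abs_mult power_abs)
  also have "\<dots> \<le> bessel_coeff \<nu> n * \<bar>z\<bar> ^ n * (1/2)"
    using a q by (intro mult_left_mono) auto
  also have "\<dots> = 1/2 * norm (bessel_coeff \<nu> n * z ^ n)"
    using a by (simp add: abs_mult power_abs)
  finally show "norm (bessel_coeff \<nu> (Suc n) * z ^ Suc n) \<le> 1/2 * norm (bessel_coeff \<nu> n * z ^ n)" .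
qed simp

lemma diffs_bessel_coeff:
  assumes "\<nu> \<ge> 0"
  shows "diffs (bessel_coeff \<nu>) = bessel_coeff (\<nu> + 1)"
proof
  fix n
  define Y where "Y = fact n * Gamma (real n + (\<nu> + 1) + 1)"
  have "Y > 0" unfolding Y_def using assms by (intro mult_pos_pos Gamma_real_pos) auto
  have "diffs (bessel_coeff \<nu>) n = real (Suc n) * (1 / ((real n + 1) * Y))"
    unfolding diffs_def bessel_coeff_def Y_def by (simp add: mult.assoc add_ac)
  also have "\<dots> = 1 / Y" using \<open>Y > 0\<close> by (simp add: add.commute)
  finally show "diffs (bessel_coeff \<nu>) n = bessel_coeff (\<nu> + 1) n"
    unfolding bessel_coeff_def Y_def .
qed

lemma DERIV_bessel_series:
  "\<nu> \<ge> 0 \<Longrightarrow> (bessel_series \<nu> has_real_derivative bessel_series (\<nu> + 1) z) (at z)"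
  unfolding bessel_series_def
  using termdiffs_strong_converges_everywhere[of "bessel_coeff \<nu>" z, OF summable_bessel_series]
    diffs_bessel_coeff
  by simp

lemma bessel_series_0: "bessel_series \<nu> 0 = 1 / Gamma (\<nu> + 1)"
  unfolding bessel_series_def by (simp only: powser_zero) (simp add: bessel_coeff_def)

lemma bessel_series_pos:
  assumes "\<nu> \<ge> 0" "z \<ge> 0"
  shows "bessel_series \<nu> z > 0"
  unfolding bessel_series_def
  by (rule suminf_pos2[where i = 0])
    (use summable_bessel_series[OF assms(1)] bessel_coeff_pos[OF assms(1)] assms in
      \<open>auto intro!: mult_nonneg_nonneg less_imp_le[OF bessel_coeff_pos] zero_le_power\<close>)

lemma bessel_coeff_shift:
  assumes "\<nu> \<ge> 0"
  shows "bessel_coeff (\<nu> + 1) k = bessel_coeff \<nu> k / (real k + \<nu> + 1)"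
proof -
  have "Gamma (real k + (\<nu> + 1) + 1) = (real k + \<nu> + 1) * Gamma (real k + \<nu> + 1)"
    using Gamma_real_plus1[of "real k + \<nu> + 1"] assms by (simp add: algebra_simps)
  thus ?thesis by (simp add: bessel_coeff_def)
qed

lemma bessel_coeff_recurrence:
  assumes "\<nu> \<ge> 0"
  shows "bessel_coeff \<nu> (Suc k) = (\<nu> + 1) * bessel_coeff (\<nu> + 1) (Suc k) + bessel_coeff (\<nu> + 2) k"
proof -
  define a where "a = bessel_coeff \<nu> k"
  have c1: "bessel_coeff \<nu> (Suc k) = a / ((real k + 1) * (real k + \<nu> + 1))"
    unfolding a_def by (rule bessel_coeff_Suc[OF assms])
  have "bessel_coeff (\<nu> + 1) (Suc k) = bessel_coeff \<nu> (Suc k) / (real k + \<nu> + 2)"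
    using bessel_coeff_shift[OF assms, of "Suc k"] by (simp add: add.assoc)
  hence c2: "bessel_coeff (\<nu> + 1) (Suc k) = a / ((real k + 1) * (real k + \<nu> + 1) * (real k + \<nu> + 2))"
    unfolding c1 by simp
  have "bessel_coeff (\<nu> + 2) k = bessel_coeff (\<nu> + 1) k / (real k + \<nu> + 2)"
    using bessel_coeff_shift[of "\<nu> + 1" k] assms by (simp add: add.assoc)
  hence c3: "bessel_coeff (\<nu> + 2) k = a / ((real k + \<nu> + 1) * (real k + \<nu> + 2))"
    unfolding a_def using bessel_coeff_shift[OF assms, of k] by simp
  have "a / (p * q) = (r - p) * (a / (p * q * r)) + a / (q * r)"
    if "p > 0" "q > 0" "r > 0" for p q r :: real
    using that by (simp add: field_simps)
  from this[of "real k + 1" "real k + \<nu> + 1" "real k + \<nu> + 2"] show ?thesis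
    unfolding c1 c2 c3 using assms by (simp add: mult.assoc)
qed

lemma bessel_series_recurrence:
  assumes "\<nu> \<ge> 0"
  shows "bessel_series \<nu> z = (\<nu> + 1) * bessel_series (\<nu> + 1) z + z * bessel_series (\<nu> + 2) z"
proof -
  define h where "h k = (if k = 0 then 0 else bessel_coeff (\<nu> + 2) (k - 1) * z ^ k)" for k
  have "(\<lambda>k. z * (bessel_coeff (\<nu> + 2) k * z ^ k)) sums (z * bessel_series (\<nu> + 2) z)"
    unfolding bessel_series_def using summable_bessel_series[of "\<nu> + 2" z] assms
    by (intro sums_mult summable_sums) auto
  hence "(\<lambda>k. h (Suc k)) sums (z * bessel_series (\<nu> + 2) z)"
    by (simp add: h_def algebra_simps)
  hence "h sums (z * bessel_series (\<nu> + 2) z + h 0)" by (simp only: sums_Suc_iff)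
  hence h: "h sums (z * bessel_series (\<nu> + 2) z)" by (simp add: h_def)
  have "(\<lambda>k. (\<nu> + 1) * (bessel_coeff (\<nu> + 1) k * z ^ k)) sums ((\<nu> + 1) * bessel_series (\<nu> + 1) z)"
    unfolding bessel_series_def using summable_bessel_series[of "\<nu> + 1" z] assms
    by (intro sums_mult summable_sums) auto
  from sums_add[OF this h]
  have sum: "(\<lambda>k. (\<nu> + 1) * (bessel_coeff (\<nu> + 1) k * z ^ k) + h k)
      sums ((\<nu> + 1) * bessel_series (\<nu> + 1) z + z * bessel_series (\<nu> + 2) z)" .
  have "(\<nu> + 1) * (bessel_coeff (\<nu> + 1) k * z ^ k) + h k = bessel_coeff \<nu> k * z ^ k" for k
  proof (cases k)
    case 0
    then show ?thesis using assms by (simp add: h_def bessel_coeff_shift)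
  next
    case (Suc j)
    then show ?thesis
      using bessel_coeff_recurrence[OF assms, of j] by (simp add: h_def algebra_simps)
  qed
  with sum show ?thesis unfolding bessel_series_def by (simp add: sums_iff)
qed

lemma besselI_eq_bessel_series:
  assumes "x > 0" "\<nu> \<ge> 0"
  shows "besselI \<nu> x = (x / 2) powr \<nu> * bessel_series \<nu> (x\<^sup>2 / 4)"
proof -
  have "(x / 2) powr (2 * real k + \<nu>) = (x / 2) powr \<nu> * (x\<^sup>2 / 4) ^ k" for k
  proof -
    have "(x / 2) powr (2 * real k + \<nu>) = (x / 2) powr (real (2 * k)) * (x / 2) powr \<nu>"
      by (simp add: powr_add)
    also have "\<dots> = (x / 2) ^ (2 * k) * (x / 2) powr \<nu>"
      using powr_realpow[of "x / 2" "2 * k"] assms by simp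
    finally show ?thesis by (simp add: power_mult power_divide)
  qed
  hence "(\<lambda>k. (x / 2) powr (2 * real k + \<nu>) / (fact k * Gamma (real k + \<nu> + 1)))
      = (\<lambda>k. (x / 2) powr \<nu> * (bessel_coeff \<nu> k * (x\<^sup>2 / 4) ^ k))"
    by (simp add: bessel_coeff_def)
  thus ?thesis
    unfolding besselI_def bessel_series_def
    using suminf_mult[OF summable_bessel_series[OF assms(2)]] by simp
qed

section \<open>The Riccati equation for the Bessel quotient\<close>

definition Psi_series :: "real \<Rightarrow> real \<Rightarrow> real" where
  "Psi_series \<nu> x = x / 2 * bessel_series (\<nu> + 1) (x\<^sup>2 / 4) / bessel_series \<nu> (x\<^sup>2 / 4)"

lemma Psi_eq_Psi_series:
  assumes "x > 0" "\<nu> \<ge> 0"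
  shows "Psi \<nu> x = Psi_series \<nu> x"
proof -
  have "(x / 2) powr (\<nu> + 1) = (x / 2) powr \<nu> * (x / 2)" using assms by (simp add: powr_add)
  moreover have "(x / 2) powr \<nu> > 0" using assms by simp
  moreover have "bessel_series \<nu> (x\<^sup>2 / 4) > 0" using bessel_series_pos assms by simp
  ultimately show ?thesis
    unfolding Psi_def Psi_series_def using assms
    by (simp add: besselI_eq_bessel_series field_simps)
qed

lemma DERIV_bessel_series_square:
  assumes "\<nu> \<ge> 0"
  shows "((\<lambda>x. bessel_series \<nu> (x\<^sup>2 / 4))
    has_real_derivative bessel_series (\<nu> + 1) (x\<^sup>2 / 4) * (x / 2)) (at x)"
proof -
  have "((\<lambda>x. x\<^sup>2 / 4) has_real_derivative x / 2) (at x)"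
    by (auto intro!: derivative_eq_intros)
  from DERIV_chain2[OF DERIV_bessel_series[OF assms] this] show ?thesis .
qed

lemma Psi_series_riccati:
  assumes "\<nu> \<ge> 0" "x \<noteq> 0"
  shows "(Psi_series \<nu> has_real_derivative
    1 - (2 * \<nu> + 1) / x * Psi_series \<nu> x - (Psi_series \<nu> x)\<^sup>2) (at x)"
proof -
  define A where "A = bessel_series \<nu> (x\<^sup>2 / 4)"
  define B where "B = bessel_series (\<nu> + 1) (x\<^sup>2 / 4)"
  define C where "C = bessel_series (\<nu> + 2) (x\<^sup>2 / 4)"
  have "A > 0" unfolding A_def using bessel_series_pos assms by simp
  have dA: "((\<lambda>x. bessel_series \<nu> (x\<^sup>2 / 4)) has_real_derivative B * (x / 2)) (at x)"
    unfolding B_def by (rule DERIV_bessel_series_square[OF assms(1)])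
  have dB: "((\<lambda>x. bessel_series (\<nu> + 1) (x\<^sup>2 / 4)) has_real_derivative C * (x / 2)) (at x)"
    using DERIV_bessel_series_square[of "\<nu> + 1" x] assms unfolding C_def by (simp add: add.assoc)
  have "((\<lambda>x. x / 2 * bessel_series (\<nu> + 1) (x\<^sup>2 / 4)) has_real_derivative
      1/2 * B + x / 2 * (C * (x / 2))) (at x)"
    using DERIV_mult[OF DERIV_cdivide[OF DERIV_ident, of 2] dB] unfolding B_def
    by (simp add: mult_ac)
  from DERIV_divide[OF this dA]
  have du: "(Psi_series \<nu> has_real_derivative
      ((1/2 * B + x / 2 * (C * (x / 2))) * A - x / 2 * B * (B * (x / 2))) / (A * A)) (at x)"
    using \<open>A > 0\<close> unfolding Psi_series_def A_def B_def by simp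
  have "A = (\<nu> + 1) * B + x\<^sup>2 / 4 * C"
    unfolding A_def B_def C_def by (rule bessel_series_recurrence[OF assms(1)])
  hence C: "x / 2 * (C * (x / 2)) = A - (\<nu> + 1) * B" by (simp add: power2_eq_square field_simps)
  have u: "Psi_series \<nu> x = x / 2 * B / A" unfolding Psi_series_def A_def B_def ..
  have "((1/2 * B + x / 2 * (C * (x / 2))) * A - x / 2 * B * (B * (x / 2))) / (A * A)
      = 1 - (2 * \<nu> + 1) / x * Psi_series \<nu> x - (Psi_series \<nu> x)\<^sup>2"
    unfolding C u using \<open>A > 0\<close> assms(2) by (simp add: field_simps power2_eq_square)
  with du show ?thesis by simp
qed

lemma Psi_series_over_x_at_0:
  assumes "\<nu> \<ge> 0"
  shows "((\<lambda>x. Psi_series \<nu> x / x) \<longlongrightarrow> 1 / (2 * \<nu> + 2)) (at_right 0)"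
proof -
  define f where "f x = bessel_series (\<nu> + 1) (x\<^sup>2 / 4) / (2 * bessel_series \<nu> (x\<^sup>2 / 4))" for x
  have "isCont (\<lambda>x. bessel_series (\<nu> + 1) (x\<^sup>2 / 4)) 0" "isCont (\<lambda>x. bessel_series \<nu> (x\<^sup>2 / 4)) 0"
    using DERIV_isCont[OF DERIV_bessel_series_square] assms by simp_all
  moreover have "bessel_series \<nu> 0 > 0" using bessel_series_pos assms by simp
  ultimately have "isCont f 0" unfolding f_def by (intro isCont_divide continuous_intros) auto
  hence "(f \<longlongrightarrow> f 0) (at_right 0)"
    by (rule tendsto_mono[OF at_le, rotated, OF isContD]) simp
  moreover have "Gamma (\<nu> + 2) = (\<nu> + 1) * Gamma (\<nu> + 1)"
    using Gamma_real_plus1[of "\<nu> + 1"] assms by (simp add: add.assoc)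
  hence "f 0 = 1 / (2 * \<nu> + 2)"
    unfolding f_def using assms mult_pos_pos[of "\<nu> + 1" "Gamma (\<nu> + 1)"]
    by (simp add: bessel_series_0 add.assoc field_simps)
  moreover have "eventually (\<lambda>x. f x = Psi_series \<nu> x / x) (at_right 0)"
    using eventually_at_right_less[of 0] by eventually_elim (simp add: f_def Psi_series_def)
  ultimately show ?thesis by (simp add: tendsto_cong)
qed

section \<open>Comparison with explicit barriers\<close>

definition riccati_barrier :: "real \<Rightarrow> real \<Rightarrow> real \<Rightarrow> real" where
  "riccati_barrier c b x = x / (c + sqrt (x\<^sup>2 + b\<^sup>2))"

lemma DERIV_riccati_barrier:
  fixes c b t :: real
  assumes "c \<ge> 0" "b > 0"
  shows "(riccati_barrier c b has_real_derivative
    (c * sqrt (t\<^sup>2 + b\<^sup>2) + b\<^sup>2) / (sqrt (t\<^sup>2 + b\<^sup>2) * (c + sqrt (t\<^sup>2 + b\<^sup>2))\<^sup>2)) (at t)"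
proof -
  define s where "s = sqrt (t\<^sup>2 + b\<^sup>2)"
  have "t\<^sup>2 + b\<^sup>2 > 0" using assms by (simp add: add_nonneg_pos)
  hence "s > 0" unfolding s_def by simp
  hence "c + sqrt (t\<^sup>2 + b\<^sup>2) \<noteq> 0" using assms unfolding s_def by linarith
  have "((\<lambda>x. x / (c + sqrt (x\<^sup>2 + b\<^sup>2))) has_real_derivative
      (1 * (c + s) - t * (inverse s / 2 * (2 * t))) / ((c + s) * (c + s))) (at t)"
    using \<open>t\<^sup>2 + b\<^sup>2 > 0\<close> \<open>c + sqrt (t\<^sup>2 + b\<^sup>2) \<noteq> 0\<close> unfolding s_def
    by (auto intro!: derivative_eq_intros)
  moreover have "(1 * (c + s) - t * (inverse s / 2 * (2 * t))) / ((c + s) * (c + s))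
      = (c * s + b\<^sup>2) / (s * (c + s)\<^sup>2)"
    using \<open>s > 0\<close> assms by (simp add: s_def field_simps power2_eq_square)
  ultimately show ?thesis unfolding riccati_barrier_def s_def by simp
qed

text \<open>The left-hand side is \<open>F(t, w(t)) - w'(t)\<close> for \<open>F(t,y) = 1 - (2c/t) y - y\<^sup>2\<close>, the
  right-hand side of the Riccati equation of \<open>\<Psi>\<^sub>\<nu>\<close>; its sign decides whether the barrier
  \<open>w\<close> is a sub- or a supersolution.\<close>

lemma riccati_barrier_defect:
  fixes c b t :: real
  assumes "c > 0" "b > 0" "t > 0"
  defines "s \<equiv> sqrt (t\<^sup>2 + b\<^sup>2)"
  shows "1 - 2 * c / t * riccati_barrier c b t - (riccati_barrier c b t)\<^sup>2
      - (c * s + b\<^sup>2) / (s * (c + s)\<^sup>2) = (b\<^sup>2 - c\<^sup>2 - c - b\<^sup>2 / s) / (c + s)\<^sup>2"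
proof -
  have "s > 0" unfolding s_def using assms by (simp add: add_nonneg_pos)
  hence cs: "c + s > 0" using assms(1) by linarith
  have w: "riccati_barrier c b t = t / (c + s)" unfolding riccati_barrier_def s_def ..
  have "t\<^sup>2 = s\<^sup>2 - b\<^sup>2" unfolding s_def by simp
  hence n: "(c + s)\<^sup>2 - 2 * c * (c + s) - t\<^sup>2 = b\<^sup>2 - c\<^sup>2" by (simp add: power2_eq_square algebra_simps)
  have "1 - 2 * c / t * riccati_barrier c b t - (riccati_barrier c b t)\<^sup>2
      = 1 - 2 * c / (c + s) - t\<^sup>2 / (c + s)\<^sup>2"
    unfolding w using assms(3) by (simp add: power_divide)
  also have "\<dots> = ((c + s)\<^sup>2 - 2 * c * (c + s) - t\<^sup>2) / (c + s)\<^sup>2"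
    using cs by (simp add: diff_divide_distrib power2_eq_square)
  finally have "1 - 2 * c / t * riccati_barrier c b t - (riccati_barrier c b t)\<^sup>2 = (b\<^sup>2 - c\<^sup>2) / (c + s)\<^sup>2"
    unfolding n .
  moreover have "(c * s + b\<^sup>2) / (s * (c + s)\<^sup>2) = (c + b\<^sup>2 / s) / (c + s)\<^sup>2"
    using cs \<open>s > 0\<close> by (simp add: field_simps)
  ultimately show ?thesis by (simp add: diff_divide_distrib add_divide_distrib divide_divide_eq_left)
qed

lemma riccati_barrier_over_x_at_0:
  assumes "c > 0" "b > 0"
  shows "((\<lambda>x. riccati_barrier c b x / x) \<longlongrightarrow> 1 / (c + b)) (at_right 0)"
proof -
  have "((\<lambda>x. 1 / (c + sqrt (x\<^sup>2 + b\<^sup>2))) \<longlongrightarrow> 1 / (c + sqrt (0\<^sup>2 + b\<^sup>2))) (at_right 0)"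
    using assms by (intro tendsto_intros) (auto simp: add_pos_nonneg)
  moreover have "eventually (\<lambda>x. 1 / (c + sqrt (x\<^sup>2 + b\<^sup>2)) = riccati_barrier c b x / x) (at_right 0)"
    using eventually_at_right_less[of 0] by eventually_elim (simp add: riccati_barrier_def)
  ultimately show ?thesis using assms by (simp add: tendsto_cong)
qed

lemma riccati_barrier_asymptotic:
  fixes c b :: real
  assumes "c > 0" "b > 0"
  shows "((\<lambda>x. x * (1 - riccati_barrier c b x)) \<longlongrightarrow> c) at_top"
  unfolding riccati_barrier_def using assms by real_asymp

lemma first_zero_crossing:
  fixes D :: "real \<Rightarrow> real"
  assumes cont: "continuous_on {a..b} D" and "D a < 0" "D b \<ge> 0" "a \<le> b"
  obtains t where "a < t" "t \<le> b" "D t = 0" "\<And>y. a \<le> y \<Longrightarrow> y < t \<Longrightarrow> D y < 0"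
proof -
  define Z where "Z = {t \<in> {a..b}. D t = 0}"
  have "Z \<noteq> {}" using IVT'[of D a 0 b, OF _ \<open>D b \<ge> 0\<close> _ cont] assms unfolding Z_def by auto
  moreover have "closed Z"
    unfolding Z_def by (rule continuous_closed_preimage_constant[OF cont]) simp
  moreover have Zb: "bdd_below Z" unfolding Z_def by (auto intro: bdd_belowI[of _ a])
  ultimately have "Inf Z \<in> Z" by (intro closed_contains_Inf)
  hence t: "a \<le> Inf Z" "Inf Z \<le> b" "D (Inf Z) = 0" unfolding Z_def by auto
  have "D y < 0" if y: "a \<le> y" "y < Inf Z" for y
  proof (rule ccontr)
    assume "\<not> D y < 0"
    moreover have "continuous_on {a..y} D" using y t by (intro continuous_on_subset[OF cont]) auto
    ultimately obtain r where r: "a \<le> r" "r \<le> y" "D r = 0"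
      using IVT'[of D a 0 y] \<open>D a < 0\<close> y by force
    hence "r \<in> Z" using y t unfolding Z_def by auto
    hence "Inf Z \<le> r" using Zb by (simp add: cInf_lower)
    thus False using r y by simp
  qed
  moreover have "a < Inf Z" using t \<open>D a < 0\<close> by (cases "a = Inf Z") auto
  ultimately show ?thesis using that t by blast
qed

lemma neg_if_DERIV_neg_at_zeros:
  fixes D D' :: "real \<Rightarrow> real"
  assumes deriv: "\<And>t. t > a \<Longrightarrow> (D has_real_derivative D' t) (at t)"
    and zero: "\<And>t. t > a \<Longrightarrow> D t = 0 \<Longrightarrow> D' t < 0"
    and start: "eventually (\<lambda>x. D x < 0) (at_right a)"
    and "x > a"
  shows "D x < 0"
proof (rule ccontr)
  assume "\<not> D x < 0"
  from start obtain b where b: "b > a" "\<And>y. a < y \<Longrightarrow> y < b \<Longrightarrow> D y < 0"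
    unfolding eventually_at_right_field by auto
  define d where "d = min ((a + b) / 2) ((a + x) / 2)"
  have d: "a < d" "d < b" "d < x" using b \<open>x > a\<close> unfolding d_def by (auto simp: min_def)
  hence "D d < 0" by (intro b(2))
  have cont: "continuous_on {d..x} D"
    using d by (intro continuous_at_imp_continuous_on ballI) (auto intro!: DERIV_isCont[OF deriv])
  have "D x \<ge> 0" "d \<le> x" using \<open>\<not> D x < 0\<close> d by simp_all
  then obtain t where t: "d < t" "t \<le> x" "D t = 0" "\<And>y. d \<le> y \<Longrightarrow> y < t \<Longrightarrow> D y < 0"
    using first_zero_crossing[OF cont \<open>D d < 0\<close>] by metis
  have "D' t < 0" using zero t d by simp
  then obtain e where e: "e > 0" "\<And>h. h > 0 \<Longrightarrow> h < e \<Longrightarrow> D t < D (t - h)"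
    using DERIV_neg_dec_left[OF deriv[of t]] t d by force
  define h where "h = min (e / 2) ((t - d) / 2)"
  have h: "0 < h" "h < e" "d \<le> t - h"
    using e(1) t(1) unfolding h_def by (auto simp: min_def field_simps)
  have "D t < D (t - h)" using e(2) h by simp
  moreover have "D (t - h) < 0" using t(4) h by simp
  ultimately show False using t by simp
qed

lemma less_if_DERIV_less_at_contact:
  fixes u v u' v' :: "real \<Rightarrow> real"
  assumes "\<And>t. t > 0 \<Longrightarrow> (u has_real_derivative u' t) (at t)"
    and "\<And>t. t > 0 \<Longrightarrow> (v has_real_derivative v' t) (at t)"
    and "\<And>t. t > 0 \<Longrightarrow> u t = v t \<Longrightarrow> u' t < v' t"
    and "((\<lambda>x. u x / x) \<longlongrightarrow> p) (at_right 0)" "((\<lambda>x. v x / x) \<longlongrightarrow> q) (at_right 0)" "p < q"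
    and "x > 0"
  shows "u x < v x"
proof -
  have "((\<lambda>x. (u x - v x) / x) \<longlongrightarrow> p - q) (at_right 0)"
    using tendsto_diff[OF assms(4,5)] by (simp add: diff_divide_distrib)
  hence "eventually (\<lambda>x. (u x - v x) / x < 0) (at_right 0)"
    using \<open>p < q\<close> by (intro order_tendstoD(2)) auto
  hence "eventually (\<lambda>x. u x - v x < 0) (at_right 0)"
    using eventually_at_right_less[of 0] by eventually_elim (simp add: divide_less_0_iff)
  with assms show ?thesis
    using neg_if_DERIV_neg_at_zeros[of 0 "\<lambda>x. u x - v x" "\<lambda>t. u' t - v' t" x]
    by (auto intro: DERIV_diff)
qed

lemma Psi_series_between_barriers:
  assumes "\<nu> \<ge> 0" "x > 0"
  defines "c \<equiv> \<nu> + 1/2"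
  shows "riccati_barrier c (c + 2) x < Psi_series \<nu> x" "Psi_series \<nu> x < riccati_barrier c c x"
proof -
  have c: "c > 0" unfolding c_def using assms by simp
  define s where "s b t = sqrt (t\<^sup>2 + b\<^sup>2)" for b t :: real
  define w' where "w' b t = (c * s b t + b\<^sup>2) / (s b t * (c + s b t)\<^sup>2)" for b t
  have barrier: "(riccati_barrier c b has_real_derivative w' b t) (at t)" if "b > 0" for b t
    unfolding w'_def s_def using DERIV_riccati_barrier[of c b t] c that by simp
  have Psi: "(Psi_series \<nu> has_real_derivative
      1 - 2 * c / t * Psi_series \<nu> t - (Psi_series \<nu> t)\<^sup>2) (at t)" if "t > 0" for t
    using Psi_series_riccati[OF assms(1)] that unfolding c_def by (simp add: algebra_simps)
  have s_pos: "s b t > 0" if "b > 0" for b t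
    unfolding s_def using that by (simp add: add_nonneg_pos)
  have Psi0: "((\<lambda>x. Psi_series \<nu> x / x) \<longlongrightarrow> 1 / (2 * c + 1)) (at_right 0)"
    using Psi_series_over_x_at_0[OF assms(1)] unfolding c_def by (simp add: algebra_simps)
  show "Psi_series \<nu> x < riccati_barrier c c x"
  proof (rule less_if_DERIV_less_at_contact[OF Psi barrier _ Psi0 riccati_barrier_over_x_at_0])
    fix t :: real assume t: "t > 0" and contact: "Psi_series \<nu> t = riccati_barrier c c t"
    have "1 - 2 * c / t * riccati_barrier c c t - (riccati_barrier c c t)\<^sup>2 - w' c t
        = (c\<^sup>2 - c\<^sup>2 - c - c\<^sup>2 / s c t) / (c + s c t)\<^sup>2"
      using riccati_barrier_defect[OF c c t] unfolding w'_def s_def .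
    also have "\<dots> < 0"
    proof (rule divide_neg_pos)
      have "c\<^sup>2 / s c t \<ge> 0" using s_pos[OF c, of t] by simp
      thus "c\<^sup>2 - c\<^sup>2 - c - c\<^sup>2 / s c t < 0" using c by linarith
    qed (use c s_pos[OF c, of t] in simp)
    finally show "1 - 2 * c / t * Psi_series \<nu> t - (Psi_series \<nu> t)\<^sup>2 < w' c t"
      using contact by simp
  qed (use c assms in \<open>auto simp: field_simps\<close>)
  text \<open>Any \<open>b > c + 1\<close> makes \<open>b\<^sup>2 - c\<^sup>2 - c - b > 0\<close>, i.e. a subsolution, and at the
    same time keeps the barrier below \<open>\<Psi>\<^sub>\<nu>\<close> near \<open>0\<close>.\<close>
  show "riccati_barrier c (c + 2) x < Psi_series \<nu> x"
  proof (rule less_if_DERIV_less_at_contact[OF barrier Psi _ riccati_barrier_over_x_at_0 Psi0])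
    fix t :: real assume t: "t > 0" "riccati_barrier c (c + 2) t = Psi_series \<nu> t"
    have b: "c + 2 > 0" using c by simp
    have "(c + 2)\<^sup>2 < s (c + 2) t ^ 2" using t unfolding s_def by simp
    hence "c + 2 < s (c + 2) t" by (rule power2_less_imp_less[OF _ less_imp_le[OF s_pos[OF b]]])
    hence "(c + 2) * (c + 2) < (c + 2) * s (c + 2) t" using b by (rule mult_strict_left_mono)
    hence "(c + 2)\<^sup>2 / s (c + 2) t < c + 2"
      using s_pos[OF b, of t] by (simp add: pos_divide_less_eq power2_eq_square mult.commute)
    hence "(c + 2)\<^sup>2 - c\<^sup>2 - c - (c + 2)\<^sup>2 / s (c + 2) t > 0"
      using c by (simp add: power2_eq_square algebra_simps)
    hence "0 < ((c + 2)\<^sup>2 - c\<^sup>2 - c - (c + 2)\<^sup>2 / s (c + 2) t) / (c + s (c + 2) t)\<^sup>2"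
      using c s_pos[OF b, of t] by (intro divide_pos_pos) auto
    also have "\<dots> = 1 - 2 * c / t * riccati_barrier c (c + 2) t - (riccati_barrier c (c + 2) t)\<^sup>2
        - w' (c + 2) t"
      using riccati_barrier_defect[OF c b \<open>t > 0\<close>] unfolding w'_def s_def by simp
    finally show "w' (c + 2) t < 1 - 2 * c / t * Psi_series \<nu> t - (Psi_series \<nu> t)\<^sup>2"
      using t by simp
  qed (use c assms in \<open>auto simp: field_simps\<close>)
qed

section \<open>Asymptotics\<close>

lemma Psi_asymptotic:
  assumes "\<nu> \<ge> 0"
  shows "((\<lambda>x. x * (1 - Psi \<nu> x)) \<longlongrightarrow> \<nu> + 1/2) at_top"
proof (rule tendsto_sandwich)
  let ?c = "\<nu> + 1/2"
  show "eventually (\<lambda>x. x * (1 - riccati_barrier ?c ?c x) \<le> x * (1 - Psi \<nu> x)) at_top"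
    "eventually (\<lambda>x. x * (1 - Psi \<nu> x) \<le> x * (1 - riccati_barrier ?c (?c + 2) x)) at_top"
    using eventually_gt_at_top[of 0]
    by (eventually_elim, use Psi_series_between_barriers[OF assms] Psi_eq_Psi_series[OF _ assms] in
        \<open>simp add: mult_left_mono less_imp_le\<close>)+
  show "((\<lambda>x. x * (1 - riccati_barrier ?c ?c x)) \<longlongrightarrow> ?c) at_top"
    "((\<lambda>x. x * (1 - riccati_barrier ?c (?c + 2) x)) \<longlongrightarrow> ?c) at_top"
    using assms by (intro riccati_barrier_asymptotic; simp)+
qed

lemma tendsto_mult_ln_one_minus_div:
  fixes q :: "real \<Rightarrow> real"
  assumes q: "(q \<longlongrightarrow> L) at_top"
  shows "((\<lambda>x. x * ln (1 - q x / x)) \<longlongrightarrow> - L) at_top"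
proof (rule tendsto_sandwich)
  have qx: "((\<lambda>x. q x / x) \<longlongrightarrow> 0) at_top"
    by (rule tendsto_divide_0[OF q filterlim_at_top_imp_at_infinity[OF filterlim_ident]])
  have ev: "eventually (\<lambda>x. q x / x < 1 \<and> x > 0) at_top"
    using order_tendstoD(2)[OF qx zero_less_one] eventually_gt_at_top[of 0] by eventually_elim auto
  show "eventually (\<lambda>x. x * ln (1 - q x / x) \<le> - q x) at_top"
    using ev
  proof eventually_elim
    case (elim x)
    have "ln (1 - q x / x) \<le> - (q x / x)" using ln_le_minus_one[of "1 - q x / x"] elim by simp
    hence "x * ln (1 - q x / x) \<le> x * (- (q x / x))" using elim by (intro mult_left_mono) auto
    thus ?case using elim by simp
  qed
  show "eventually (\<lambda>x. - q x / (1 - q x / x) \<le> x * ln (1 - q x / x)) at_top"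
    using ev
  proof eventually_elim
    case (elim x)
    define y where "y = 1 - q x / x"
    have "y > 0" using elim unfolding y_def by simp
    have "ln (1 / y) \<le> 1 / y - 1" using \<open>y > 0\<close> by (intro ln_le_minus_one) simp
    hence "x * (1 - 1 / y) \<le> x * ln y" using \<open>y > 0\<close> elim by (intro mult_left_mono) (auto simp: ln_div)
    moreover have "x * (1 - 1 / y) = - q x / y" using \<open>y > 0\<close> elim unfolding y_def
      by (simp add: field_simps)
    ultimately show ?case unfolding y_def by simp
  qed
  have "((\<lambda>x. - q x / (1 - q x / x)) \<longlongrightarrow> - L / (1 - 0)) at_top"
    by (intro tendsto_intros q qx) simp
  then show "((\<lambda>x. - q x / (1 - q x / x)) \<longlongrightarrow> - L) at_top" by simp
  show "((\<lambda>x. - q x) \<longlongrightarrow> - L) at_top" by (intro tendsto_intros q)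
qed

theorem mainTheorem6:
  fixes \<nu> :: real
  assumes "\<nu> \<ge> 0"
  shows "((\<lambda>x. lambda_nu \<nu> x) \<longlongrightarrow> 4 / (2 * \<nu> + 1)) at_top"
proof -
  define p where "p x = x * (1 - Psi \<nu> x)" for x
  have p: "(p \<longlongrightarrow> \<nu> + 1/2) at_top" unfolding p_def by (rule Psi_asymptotic[OF assms])
  have Psi_eq: "eventually (\<lambda>x. 1 - p x / x = Psi \<nu> x) at_top"
    using eventually_gt_at_top[of 0] by eventually_elim (simp add: p_def)
  have "((\<lambda>x. 1 - p x / x) \<longlongrightarrow> 1 - 0) at_top"
    by (intro tendsto_diff tendsto_const tendsto_divide_0[OF p]
        filterlim_at_top_imp_at_infinity[OF filterlim_ident])
  hence "(Psi \<nu> \<longlongrightarrow> 1) at_top" using tendsto_cong[OF Psi_eq] by simp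
  from tendsto_mult_ln_one_minus_div[OF tendsto_mult_left[OF this, of 2]]
  have num: "((\<lambda>x. x * ln (1 - 2 * Psi \<nu> x / x)) \<longlongrightarrow> - 2) at_top" by simp
  have den: "((\<lambda>x. x * ln (1 - p x / x)) \<longlongrightarrow> - (\<nu> + 1/2)) at_top"
    by (rule tendsto_mult_ln_one_minus_div[OF p])
  have "- (\<nu> + 1/2) \<noteq> 0" "(- 2) / (- (\<nu> + 1/2)) = 4 / (2 * \<nu> + 1)"
    using assms by (simp_all add: field_simps)
  with tendsto_divide[OF num den]
  have "((\<lambda>x. x * ln (1 - 2 * Psi \<nu> x / x) / (x * ln (1 - p x / x))) \<longlongrightarrow> 4 / (2 * \<nu> + 1)) at_top"
    by simp
  moreover have "eventually (\<lambda>x. x * ln (1 - 2 * Psi \<nu> x / x) / (x * ln (1 - p x / x))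
      = lambda_nu \<nu> x) at_top"
    using eventually_gt_at_top[of 0] Psi_eq by eventually_elim (simp add: lambda_nu_def)
  ultimately show ?thesis by (rule tendsto_cong[THEN iffD1, rotated])
qed

end
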